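(* Assume that for any $i,j\in[1,n]$ the distance $|v_iv_j|$ can be obtained in $O(1)$ time. For $i\in[1,n]$ define $\lambda_i=\min_{j\in[i,n]}\max_{k\in[i,n]} d_{G(i,j)}(v_i,v_k)$ and let $j(i)$ be an index $j\in[i,n]$ attaining this minimum. Then there is an algorithm that computes $\lambda_i$ and $j(i)$ for all $i\in[1,n]$ in total $O(n)$ time.
   Context: Let $v_1,\dots,v_n$ be points of a metric space with metric $|\cdot|$: $|v_iv_j|=|v_jv_i|\ge 0$, $|v_iv_j|=0$ iff $i=j$, and $|v_iv_k|+|v_kv_j|\ge |v_iv_j|$. $P$ is the path graph with vertices $v_1,\dots,v_n$ and edges $e(v_k,v_{k+1})$, $k\in[1,n-1]$, where $e(v_k,v_{k+1})$ has length $|v_kv_{k+1}|$. For $1\le i\le j\le n$, $G(i,j)=P\cup\{e(v_i,v_j)\}$ is obtained from $P$ by adding an edge $e(v_i,v_j)$ of length $|v_iv_j|$ (if $j\le i+1$ then $G(i,j)=P$). For a graph $G$, $d_G(p,q)$ denotes the length of a shortest path between $p$ and $q$ in $G$. *)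

theory Defs
  imports Main "HOL.Real"
begin

definition metric_on :: "(nat \<Rightarrow> nat \<Rightarrow> real) \<Rightarrow> nat \<Rightarrow> bool" where
  "metric_on d n \<longleftrightarrow>
     (\<forall>i\<in>{1..n}. \<forall>j\<in>{1..n}. d i j = d j i \<and> d i j \<ge> 0 \<and> (d i j = 0 \<longleftrightarrow> i = j)) \<and>
     (\<forall>i\<in>{1..n}. \<forall>j\<in>{1..n}. \<forall>k\<in>{1..n}. d i k + d k j \<ge> d i j)"

definition path_edges :: "nat \<Rightarrow> (nat \<times> nat) set" where
  "path_edges n = {(k, Suc k) | k. 1 \<le> k \<and> k < n} \<union> {(Suc k, k) | k. 1 \<le> k \<and> k < n}"

definition G_edges :: "nat \<Rightarrow> nat \<Rightarrow> nat \<Rightarrow> (nat \<times> nat) set" where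
  "G_edges n i j = (if j \<le> i + 1 then path_edges n else path_edges n \<union> {(i, j), (j, i)})"

definition is_walk :: "(nat \<times> nat) set \<Rightarrow> nat \<Rightarrow> nat \<Rightarrow> nat list \<Rightarrow> bool" where
  "is_walk E p q xs \<longleftrightarrow> xs \<noteq> [] \<and> hd xs = p \<and> last xs = q \<and>
     (\<forall>m. Suc m < length xs \<longrightarrow> (xs ! m, xs ! Suc m) \<in> E)"

text \<open>Length of a walk; the edge e(v_a,v_b) has length |v_a v_b| = d a b.\<close>
definition walk_len :: "(nat \<Rightarrow> nat \<Rightarrow> real) \<Rightarrow> nat list \<Rightarrow> real" where
  "walk_len d xs = (\<Sum>m<length xs - 1. d (xs ! m) (xs ! Suc m))"

definition graph_dist :: "(nat \<Rightarrow> nat \<Rightarrow> real) \<Rightarrow> (nat \<times> nat) set \<Rightarrow> nat \<Rightarrow> nat \<Rightarrow> real" where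
  "graph_dist d E p q = Inf {walk_len d xs | xs. is_walk E p q xs}"

definition dG :: "(nat \<Rightarrow> nat \<Rightarrow> real) \<Rightarrow> nat \<Rightarrow> nat \<Rightarrow> nat \<Rightarrow> nat \<Rightarrow> nat \<Rightarrow> real" where
  "dG d n i j p q = graph_dist d (G_edges n i j) p q"

definition ecc :: "(nat \<Rightarrow> nat \<Rightarrow> real) \<Rightarrow> nat \<Rightarrow> nat \<Rightarrow> nat \<Rightarrow> real" where
  "ecc d n i j = Max ((\<lambda>k. dG d n i j i k) ` {i..n})"

definition lam :: "(nat \<Rightarrow> nat \<Rightarrow> real) \<Rightarrow> nat \<Rightarrow> nat \<Rightarrow> real" where
  "lam d n i = Min ((\<lambda>j. ecc d n i j) ` {i..n})"

section \<open>Machine model: unit-cost RAM with an integer memory and a real memory,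
  and an O(1) distance oracle\<close>

text \<open>All operands are (direct) memory addresses; ILoad/IStore/RLoad/RStore
  give indirect addressing through integer cells.\<close>
datatype instr =
    IConst int int
  | IAdd int int int
  | ISub int int int
  | ILoad int int
  | IStore int int
  | RConst int real
  | RAdd int int int
  | RSub int int int
  | RLoad int int
  | RStore int int
  | Dist int int int          (* rm a := |v_{im b} v_{im c}| (oracle, O(1)) *)
  | IJumpLe int int nat
  | RJumpLe int int nat
  | Halt

type_synonym conf = "nat \<times> (int \<Rightarrow> int) \<times> (int \<Rightarrow> real)"

fun exec :: "instr \<Rightarrow> (nat \<Rightarrow> nat \<Rightarrow> real) \<Rightarrow> conf \<Rightarrow> conf" where
  "exec (IConst a k) d (pc, im, rm) = (Suc pc, im(a := k), rm)"
| "exec (IAdd a b c) d (pc, im, rm) = (Suc pc, im(a := im b + im c), rm)"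
| "exec (ISub a b c) d (pc, im, rm) = (Suc pc, im(a := im b - im c), rm)"
| "exec (ILoad a b) d (pc, im, rm) = (Suc pc, im(a := im (im b)), rm)"
| "exec (IStore a b) d (pc, im, rm) = (Suc pc, im(im a := im b), rm)"
| "exec (RConst a x) d (pc, im, rm) = (Suc pc, im, rm(a := x))"
| "exec (RAdd a b c) d (pc, im, rm) = (Suc pc, im, rm(a := rm b + rm c))"
| "exec (RSub a b c) d (pc, im, rm) = (Suc pc, im, rm(a := rm b - rm c))"
| "exec (RLoad a b) d (pc, im, rm) = (Suc pc, im, rm(a := rm (im b)))"
| "exec (RStore a b) d (pc, im, rm) = (Suc pc, im, rm(im a := rm b))"
| "exec (Dist a b c) d (pc, im, rm) = (Suc pc, im, rm(a := d (nat (im b)) (nat (im c))))"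
| "exec (IJumpLe a b t) d (pc, im, rm) = ((if im a \<le> im b then t else Suc pc), im, rm)"
| "exec (RJumpLe a b t) d (pc, im, rm) = ((if rm a \<le> rm b then t else Suc pc), im, rm)"
| "exec Halt d c = c"

definition halted :: "instr list \<Rightarrow> conf \<Rightarrow> bool" where
  "halted prog c \<longleftrightarrow> fst c \<ge> length prog \<or> prog ! fst c = Halt"

definition step :: "instr list \<Rightarrow> (nat \<Rightarrow> nat \<Rightarrow> real) \<Rightarrow> conf \<Rightarrow> conf" where
  "step prog d c = (if halted prog c then c else exec (prog ! fst c) d c)"

definition init :: "nat \<Rightarrow> conf" where
  "init n = (0, (\<lambda>a. if a = 0 then int n else 0), (\<lambda>_. 0))"

text \<open>Configuration after t steps (each instruction costs one time unit).\<close>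
definition run :: "instr list \<Rightarrow> (nat \<Rightarrow> nat \<Rightarrow> real) \<Rightarrow> nat \<Rightarrow> nat \<Rightarrow> conf" where
  "run prog d n t = (step prog d ^^ t) (init n)"

text \<open>Output convention: after halting, real cell i holds lambda_i and integer
  cell i holds j(i), for i in [1,n].\<close>
definition correct_output :: "(nat \<Rightarrow> nat \<Rightarrow> real) \<Rightarrow> nat \<Rightarrow> conf \<Rightarrow> bool" where
  "correct_output d n c \<longleftrightarrow>
     (\<forall>i\<in>{1..n}. snd (snd c) (int i) = lam d n i \<and>
        fst (snd c) (int i) \<in> {int i..int n} \<and>
        ecc d n i (nat (fst (snd c) (int i))) = lam d n i)"

end

theory Submission
  imports Defs
begin

text \<open>
  Write \<open>S\<^sub>k\<close> (\<open>path_pos d k\<close>) for the length of the path from \<open>v\<^sub>1\<close> to \<open>v\<^sub>k\<close>.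
  For \<open>i \<le> j\<close> the graph \<open>G(i,j)\<close> consists of the cycle \<open>v\<^sub>i \<dots> v\<^sub>j\<close> and the tail
  \<open>v\<^sub>j \<dots> v\<^sub>n\<close>, so the eccentricity of \<open>v\<^sub>i\<close> over \<open>[i,n]\<close> is the maximum of the cycle
  eccentricity \<open>g(i,j)\<close> (\<open>cycle_ecc\<close>), attained next to the antipode of \<open>v\<^sub>i\<close> on the
  cycle, and the tail length \<open>h(i,j) = |v\<^sub>iv\<^sub>j| + S\<^sub>n - S\<^sub>j\<close> (\<open>tail_ecc\<close>).
  By the triangle inequality \<open>g\<close> is nondecreasing and \<open>h\<close> nonincreasing in \<open>j\<close>, so \<open>\<lambda>\<^sub>i\<close> is
  attained at the first index \<open>c(i)\<close> with \<open>h \<le> g\<close> or at \<open>c(i) - 1\<close>. Moreover \<open>g - h\<close> does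
  not increase with \<open>i\<close>, so \<open>c(i)\<close> is nondecreasing, and so is the antipode. After computing
  all \<open>S\<^sub>k\<close>, two pointers that only move forward therefore find every \<open>c(i)\<close> and every
  antipode in \<open>O(n)\<close> steps; the potential \<open>300 i + 100 c + 20 m\<close> of the outer index \<open>i\<close>,
  the candidate \<open>c\<close> and the antipode pointer \<open>m\<close> bounds the running time of an explicit
  RAM program implementing this.
\<close>

definition path_pos :: "(nat \<Rightarrow> nat \<Rightarrow> real) \<Rightarrow> nat \<Rightarrow> real" where
  "path_pos d k = (\<Sum>t\<in>{1..<k}. d t (Suc t))"

lemma path_pos_1 [simp]: "path_pos d (Suc 0) = 0"
  unfolding path_pos_def by simp

lemma path_pos_Suc: "1 \<le> k \<Longrightarrow> path_pos d (Suc k) = path_pos d k + d k (Suc k)"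
  unfolding path_pos_def by (simp add: sum.atLeastLessThan_Suc)

lemma Suc_mono_between:
  fixes f :: "nat \<Rightarrow> 'a::order"
  assumes "\<And>k. a \<le> k \<Longrightarrow> k < b \<Longrightarrow> f k \<le> f (Suc k)" and "a \<le> x" "x \<le> y" "y \<le> b"
  shows "f x \<le> f y"
  using assms(3,4)
proof (induct y rule: dec_induct)
  case (step y)
  then show ?case using assms(1)[of y] assms(2) by force
qed simp

lemma funpow_trans: "(f ^^ t1) a = b \<Longrightarrow> (f ^^ t2) b = c \<Longrightarrow> (f ^^ (t1 + t2)) a = c"
  by (metis add.commute funpow_add comp_apply)

lemma funpow_numeral: "(f ^^ numeral k) x = (f ^^ pred_numeral k) (f x)"
  by (simp add: numeral_eq_Suc funpow_Suc_right del: funpow.simps)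


section \<open>Walks\<close>

lemma walk_len_snoc:
  assumes "xs \<noteq> []"
  shows "walk_len d (xs @ [v]) = walk_len d xs + d (last xs) v"
proof -
  obtain l where l: "length xs = Suc l" using assms by (cases xs) auto
  have "walk_len d (xs @ [v]) = (\<Sum>m<l. d (xs ! m) (xs ! Suc m)) + d (xs ! l) v"
    unfolding walk_len_def using l by (simp add: nth_append)
  then show ?thesis
    unfolding walk_len_def using l assms by (simp add: last_conv_nth)
qed

lemma is_walk_snoc_iff:
  assumes "xs \<noteq> []"
  shows "is_walk E p v (xs @ [w]) \<longleftrightarrow> is_walk E p (last xs) xs \<and> (last xs, w) \<in> E \<and> v = w"
proof -
  obtain l where l: "length xs = Suc l" using assms by (cases xs) auto
  have "(\<forall>m. Suc m < length (xs @ [w]) \<longrightarrow> ((xs @ [w]) ! m, (xs @ [w]) ! Suc m) \<in> E) \<longleftrightarrow>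
        (\<forall>m. Suc m < length xs \<longrightarrow> (xs ! m, xs ! Suc m) \<in> E) \<and> (xs ! l, w) \<in> E"
    using l by (auto simp: nth_append less_Suc_eq)
  then show ?thesis
    using assms l by (auto simp: is_walk_def last_conv_nth hd_append)
qed

lemma potential_diff_le_walk_len:
  assumes edge: "\<And>u v. (u, v) \<in> E \<Longrightarrow> f v \<le> f u + d u v" and walk: "is_walk E p q xs"
  shows "f q - f p \<le> walk_len d xs"
  using walk
proof (induction xs arbitrary: q rule: rev_induct)
  case (snoc x xs)
  show ?case
  proof (cases "xs = []")
    case True
    then show ?thesis using snoc.prems by (auto simp: is_walk_def walk_len_def)
  next
    case False
    with snoc.prems have "is_walk E p (last xs) xs" "(last xs, x) \<in> E" "q = x"
      by (simp_all add: is_walk_snoc_iff)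
    then show ?thesis
      using snoc.IH edge walk_len_snoc[OF False, of d x] by fastforce
  qed
qed (simp add: is_walk_def)

definition has_walk :: "(nat \<Rightarrow> nat \<Rightarrow> real) \<Rightarrow> (nat \<times> nat) set \<Rightarrow> nat \<Rightarrow> nat \<Rightarrow> real \<Rightarrow> bool" where
  "has_walk d E p q x \<longleftrightarrow> (\<exists>xs. is_walk E p q xs \<and> walk_len d xs = x)"

lemma has_walk_refl: "has_walk d E p p 0"
  unfolding has_walk_def by (rule exI[of _ "[p]"]) (simp add: is_walk_def walk_len_def)

lemma has_walk_snoc:
  assumes "has_walk d E p u x" and "(u, v) \<in> E"
  shows "has_walk d E p v (x + d u v)"
proof -
  obtain xs where xs: "is_walk E p u xs" "walk_len d xs = x"
    using assms(1) unfolding has_walk_def by blast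
  then have "xs \<noteq> []" "last xs = u" unfolding is_walk_def by auto
  with xs assms(2) show ?thesis
    unfolding has_walk_def by (intro exI[of _ "xs @ [v]"]) (simp add: is_walk_snoc_iff walk_len_snoc)
qed

lemma graph_dist_eqI:
  assumes "has_walk d E p q x" and "\<And>xs. is_walk E p q xs \<Longrightarrow> x \<le> walk_len d xs"
  shows "graph_dist d E p q = x"
  unfolding graph_dist_def
  by (rule cInf_eq_minimum) (use assms in \<open>auto simp: has_walk_def\<close>)

lemma G_edges_forward: "1 \<le> k \<Longrightarrow> k < n \<Longrightarrow> (k, Suc k) \<in> G_edges n i j"
  unfolding G_edges_def path_edges_def by auto

lemma G_edges_backward: "1 \<le> k \<Longrightarrow> k < n \<Longrightarrow> (Suc k, k) \<in> G_edges n i j"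
  unfolding G_edges_def path_edges_def by auto

lemma G_edges_chord: "Suc i < j \<Longrightarrow> (i, j) \<in> G_edges n i j"
  unfolding G_edges_def by auto

lemma G_edges_cases:
  assumes "(u, v) \<in> G_edges n i j"
  obtains "1 \<le> u" "u < n" "v = Suc u" | "1 \<le> v" "v < n" "u = Suc v"
    | "Suc i < j" "u = i" "v = j" | "Suc i < j" "u = j" "v = i"
  using assms unfolding G_edges_def path_edges_def by (auto split: if_splits)


section \<open>Distances in \<open>G(i,j)\<close>\<close>

definition cycle_dist :: "(nat \<Rightarrow> nat \<Rightarrow> real) \<Rightarrow> nat \<Rightarrow> nat \<Rightarrow> nat \<Rightarrow> real" where
  "cycle_dist d i j k = min (path_pos d k - path_pos d i) (d i j + path_pos d j - path_pos d k)"

definition dG_closed :: "(nat \<Rightarrow> nat \<Rightarrow> real) \<Rightarrow> nat \<Rightarrow> nat \<Rightarrow> nat \<Rightarrow> real" where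
  "dG_closed d i j k =
     (if k \<le> j then cycle_dist d i j k else d i j + path_pos d k - path_pos d j)"

text \<open>The distance from \<open>v\<^sub>i\<close> in \<open>G(i,j)\<close>, extended to the left of \<open>v\<^sub>i\<close> by the path
  distance; it grows by at most the edge length along every edge, which yields the lower bound
  on distances in \<open>G(i,j)\<close>.\<close>

definition potential :: "(nat \<Rightarrow> nat \<Rightarrow> real) \<Rightarrow> nat \<Rightarrow> nat \<Rightarrow> nat \<Rightarrow> real" where
  "potential d i j v = (if v \<le> i then path_pos d i - path_pos d v else dG_closed d i j v)"

locale path_metric =
  fixes d :: "nat \<Rightarrow> nat \<Rightarrow> real" and n :: nat
  assumes metric: "metric_on d n"
begin

lemma dist_sym: "i \<in> {1..n} \<Longrightarrow> j \<in> {1..n} \<Longrightarrow> d i j = d j i"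
  using metric unfolding metric_on_def by blast

lemma dist_nonneg: "i \<in> {1..n} \<Longrightarrow> j \<in> {1..n} \<Longrightarrow> 0 \<le> d i j"
  using metric unfolding metric_on_def by blast

lemma dist_self: "i \<in> {1..n} \<Longrightarrow> d i i = 0"
  using metric unfolding metric_on_def by blast

lemma dist_triangle: "i \<in> {1..n} \<Longrightarrow> j \<in> {1..n} \<Longrightarrow> k \<in> {1..n} \<Longrightarrow> d i j \<le> d i k + d k j"
  using metric unfolding metric_on_def by blast

lemma path_pos_mono: "1 \<le> a \<Longrightarrow> a \<le> b \<Longrightarrow> b \<le> n \<Longrightarrow> path_pos d a \<le> path_pos d b"
  by (rule Suc_mono_between[of 1 n]) (use dist_nonneg in \<open>auto simp: path_pos_Suc\<close>)

lemma dist_le_path_pos_diff: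
  assumes "1 \<le> a" "a \<le> b" "b \<le> n"
  shows "d a b \<le> path_pos d b - path_pos d a"
  using assms(2,3)
proof (induct b rule: dec_induct)
  case base
  then show ?case using dist_self[of a] assms(1) by simp
next
  case (step b)
  have "d a (Suc b) \<le> d a b + d b (Suc b)"
    using dist_triangle[of a "Suc b" b] step assms(1) by simp
  then show ?case using step path_pos_Suc[of b d] assms(1) by simp
qed

lemma potential_edge:
  assumes ij: "1 \<le> i" "i \<le> j" "j \<le> n" and e: "(u, v) \<in> G_edges n i j"
  shows "potential d i j v \<le> potential d i j u + d u v"
proof -
  have chord: "d i j \<le> path_pos d j - path_pos d i" using dist_le_path_pos_diff[OF ij] .
  have "0 \<le> d i j" using dist_nonneg[of i j] ij by auto
  have lip: "\<bar>potential d i j (Suc k) - potential d i j k\<bar> \<le> d k (Suc k)" if k: "1 \<le> k" "k < n" for k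
  proof -
    have Sk: "path_pos d (Suc k) = path_pos d k + d k (Suc k)" using path_pos_Suc[OF k(1)] .
    have "0 \<le> d k (Suc k)" using dist_nonneg[of k "Suc k"] k by auto
    consider "Suc k \<le> i" | "k = i" "Suc i \<le> j" | "k = i" "j = i" | "i < k" "Suc k \<le> j"
      | "k = j" "i < k" | "j < k" "i < k" using ij by linarith
    then show ?thesis
    proof cases
      case 2
      have "path_pos d (Suc i) \<le> path_pos d j" using path_pos_mono[OF _ 2(2) ij(3)] by simp
      then show ?thesis using 2 Sk \<open>0 \<le> d k (Suc k)\<close> \<open>0 \<le> d i j\<close>
        unfolding potential_def dG_closed_def cycle_dist_def by (auto simp: min_def)
    next
      case 3
      then show ?thesis using Sk \<open>0 \<le> d k (Suc k)\<close> dist_self[of i] ij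
        unfolding potential_def dG_closed_def cycle_dist_def by auto
    qed (use Sk \<open>0 \<le> d k (Suc k)\<close> chord
           in \<open>auto simp: potential_def dG_closed_def cycle_dist_def min_def\<close>)
  qed
  have at_i: "potential d i j i = 0" by (simp add: potential_def)
  have at_j: "potential d i j j = d i j" if "i < j"
    using chord that unfolding potential_def dG_closed_def cycle_dist_def by (auto simp: min_def)
  from e show ?thesis
  proof (cases rule: G_edges_cases)
    case 1
    then show ?thesis using lip[of u] by auto
  next
    case 2
    then show ?thesis using lip[of v] dist_sym[of v u] by auto
  qed (use at_i at_j \<open>0 \<le> d i j\<close> dist_sym[of i j] ij in auto)
qed

lemma has_walk_forward:
  assumes "has_walk d E p a x" and "\<And>k. a \<le> k \<Longrightarrow> k < b \<Longrightarrow> (k, Suc k) \<in> E"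
    and "1 \<le> a" "a \<le> b"
  shows "has_walk d E p b (x + path_pos d b - path_pos d a)"
  using assms(4)
proof (induct b rule: dec_induct)
  case (step b)
  then have "has_walk d E p (Suc b) (x + path_pos d b - path_pos d a + d b (Suc b))"
    using has_walk_snoc assms(2) by blast
  then show ?case using path_pos_Suc[of b d] step assms(3) by (simp add: algebra_simps)
qed (simp add: assms(1))

lemma has_walk_backward:
  assumes "has_walk d E p b x" and "\<And>k. a \<le> k \<Longrightarrow> k < b \<Longrightarrow> (Suc k, k) \<in> E"
    and "1 \<le> a" "a \<le> b" "b \<le> n"
  shows "has_walk d E p a (x + path_pos d b - path_pos d a)"
  using assms(4)
proof (induct a rule: inc_induct)
  case (step a)
  then have "has_walk d E p a (x + path_pos d b - path_pos d (Suc a) + d (Suc a) a)"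
    using has_walk_snoc assms(2) by blast
  moreover have "d (Suc a) a = d a (Suc a)" using dist_sym[of a "Suc a"] step assms by auto
  ultimately show ?case using path_pos_Suc[of a d] step assms by (simp add: algebra_simps)
qed (simp add: assms(1))

lemma dG_eq_closed:
  assumes ij: "1 \<le> i" "i \<le> j" "j \<le> n" and k: "i \<le> k" "k \<le> n"
  shows "dG d n i j i k = dG_closed d i j k"
proof -
  let ?E = "G_edges n i j"
  have chord: "d i j \<le> path_pos d j - path_pos d i" using dist_le_path_pos_diff[OF ij] .
  have to_k: "has_walk d ?E i k (path_pos d k - path_pos d i)"
    using has_walk_forward[OF has_walk_refl _ ij(1) k(1)] G_edges_forward k ij by simp
  have to_j: "has_walk d ?E i j (d i j)"
  proof -
    consider "Suc i < j" | "j = Suc i" | "j = i" using ij by linarith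
    then show ?thesis
    proof cases
      case 1
      from has_walk_snoc[OF has_walk_refl G_edges_chord[OF 1]] show ?thesis by simp
    next
      case 2
      from has_walk_snoc[OF has_walk_refl G_edges_forward[of i n]] show ?thesis using 2 ij by simp
    qed (use has_walk_refl dist_self ij in simp)
  qed
  have back_k: "has_walk d ?E i k (d i j + path_pos d j - path_pos d k)" if "k \<le> j"
    using has_walk_backward[OF to_j _ _ that ij(3)] G_edges_backward ij k by auto
  have past_j: "has_walk d ?E i k (d i j + path_pos d k - path_pos d j)" if "j \<le> k"
    using has_walk_forward[OF to_j _ _ that] G_edges_forward ij k by auto
  have "has_walk d ?E i k (dG_closed d i j k)"
    unfolding dG_closed_def cycle_dist_def using to_k back_k past_j by (auto simp: min_def)
  moreover have "dG_closed d i j k \<le> walk_len d xs" if "is_walk ?E i k xs" for xs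
  proof -
    have "potential d i j k - potential d i j i \<le> walk_len d xs"
      by (rule potential_diff_le_walk_len[OF potential_edge[OF ij] that])
    moreover have "potential d i j i = 0" "potential d i j k = dG_closed d i j k"
      using k chord path_pos_mono[OF ij] dist_nonneg[of i j] ij
      by (auto simp: potential_def dG_closed_def cycle_dist_def min_def)
    ultimately show ?thesis by simp
  qed
  ultimately show ?thesis unfolding dG_def by (rule graph_dist_eqI)
qed

end


section \<open>Eccentricities in \<open>G(i,j)\<close>\<close>

definition cycle_ecc :: "(nat \<Rightarrow> nat \<Rightarrow> real) \<Rightarrow> nat \<Rightarrow> nat \<Rightarrow> real" where
  "cycle_ecc d i j = Max (cycle_dist d i j ` {i..j})"

definition tail_ecc :: "(nat \<Rightarrow> nat \<Rightarrow> real) \<Rightarrow> nat \<Rightarrow> nat \<Rightarrow> nat \<Rightarrow> real" where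
  "tail_ecc d n i j = d i j + path_pos d n - path_pos d j"

text \<open>On the cycle of \<open>G(i,j)\<close>, the vertex \<open>v\<^sub>k\<close> is reached at least as fast through the chord
  as along the path iff \<open>2 S\<^sub>k \<ge> antipode_level d i j\<close>.\<close>

definition antipode_level :: "(nat \<Rightarrow> nat \<Rightarrow> real) \<Rightarrow> nat \<Rightarrow> nat \<Rightarrow> real" where
  "antipode_level d i j = path_pos d i + path_pos d j + d i j"

lemma cycle_dist_le_cycle_ecc: "i \<le> k \<Longrightarrow> k \<le> j \<Longrightarrow> cycle_dist d i j k \<le> cycle_ecc d i j"
  unfolding cycle_ecc_def by (rule Max_ge) auto

lemma cycle_ecc_attained:
  assumes "i \<le> j"
  obtains k where "k \<in> {i..j}" "cycle_ecc d i j = cycle_dist d i j k"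
proof -
  have "cycle_ecc d i j \<in> cycle_dist d i j ` {i..j}"
    unfolding cycle_ecc_def using assms by (intro Max_in) auto
  then show ?thesis using that by blast
qed

context path_metric
begin

lemma tail_ecc_le_cycle_ecc_last:
  assumes "1 \<le> i" "i \<le> n"
  shows "tail_ecc d n i n \<le> cycle_ecc d i n"
proof -
  have "d i n \<le> path_pos d n - path_pos d i" using dist_le_path_pos_diff[OF assms] by simp
  then have "tail_ecc d n i n = cycle_dist d i n n"
    unfolding tail_ecc_def cycle_dist_def by (simp add: min_def)
  then show ?thesis using cycle_dist_le_cycle_ecc[of i n n d] assms by simp
qed

lemma ecc_eq_max:
  assumes ij: "1 \<le> i" "i \<le> j" "j \<le> n"
  shows "ecc d n i j = max (cycle_ecc d i j) (tail_ecc d n i j)"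
proof -
  have "ecc d n i j = Max (dG_closed d i j ` {i..n})"
    unfolding ecc_def using dG_eq_closed[OF ij] by (intro arg_cong[where f=Max] image_cong) auto
  also have "\<dots> = max (cycle_ecc d i j) (tail_ecc d n i j)"
  proof (rule Max_eqI)
    show "finite (dG_closed d i j ` {i..n})" by simp
  next
    fix y assume "y \<in> dG_closed d i j ` {i..n}"
    then obtain k where k: "k \<in> {i..n}" "y = dG_closed d i j k" by auto
    show "y \<le> max (cycle_ecc d i j) (tail_ecc d n i j)"
    proof (cases "k \<le> j")
      case True
      then have "y = cycle_dist d i j k" using k unfolding dG_closed_def cycle_dist_def by simp
      then show ?thesis using cycle_dist_le_cycle_ecc[of i k j d] k True by simp
    next
      case False
      have "path_pos d k \<le> path_pos d n" using path_pos_mono[of k n] k ij by auto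
      then show ?thesis using k False unfolding dG_closed_def tail_ecc_def by simp
    qed
  next
    show "max (cycle_ecc d i j) (tail_ecc d n i j) \<in> dG_closed d i j ` {i..n}"
    proof (cases "tail_ecc d n i j \<le> cycle_ecc d i j")
      case True
      obtain k where k: "k \<in> {i..j}" "cycle_ecc d i j = cycle_dist d i j k"
        using cycle_ecc_attained[OF ij(2)] by blast
      then have "dG_closed d i j k = cycle_ecc d i j" unfolding dG_closed_def cycle_dist_def by simp
      then show ?thesis using k True ij by (auto intro!: image_eqI[of _ _ k])
    next
      case False
      have jn: "j < n"
        using False tail_ecc_le_cycle_ecc_last[of i] ij by (cases "j = n") auto
      then have "dG_closed d i j n = tail_ecc d n i j" unfolding dG_closed_def tail_ecc_def by simp
      then show ?thesis using False ij jn by (auto intro!: image_eqI[of _ _ n])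
    qed
  qed
  finally show ?thesis .
qed

lemma cycle_ecc_antipode:
  assumes ij: "1 \<le> i" "i \<le> m" "m \<le> j" "j \<le> n"
    and lt: "\<forall>k\<in>{i..<m}. path_pos d k + path_pos d k < antipode_level d i j"
    and ge: "antipode_level d i j \<le> path_pos d m + path_pos d m"
  shows "cycle_ecc d i j =
           (if m \<le> i then d i j + path_pos d j - path_pos d m
            else max (d i j + path_pos d j - path_pos d m) (path_pos d (m - 1) - path_pos d i))"
    (is "_ = ?v")
  unfolding cycle_ecc_def
proof (rule Max_eqI)
  show "finite (cycle_dist d i j ` {i..j})" by simp
next
  fix y assume "y \<in> cycle_dist d i j ` {i..j}"
  then obtain k where k: "k \<in> {i..j}" "y = cycle_dist d i j k" by auto
  show "y \<le> ?v"
  proof (cases "k < m")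
    case True
    then have "path_pos d k + path_pos d k < antipode_level d i j" using lt k by auto
    then have "y = path_pos d k - path_pos d i"
      using k unfolding cycle_dist_def antipode_level_def by auto
    moreover have "path_pos d k \<le> path_pos d (m - 1)"
      using path_pos_mono[of k "m - 1"] k True ij by auto
    ultimately show ?thesis using True k by auto
  next
    case False
    have "path_pos d m \<le> path_pos d k" using path_pos_mono[of m k] k False ij by auto
    then have "y \<le> d i j + path_pos d j - path_pos d m" using k unfolding cycle_dist_def by auto
    then show ?thesis by auto
  qed
next
  have at_m: "cycle_dist d i j m = d i j + path_pos d j - path_pos d m"
    using ge unfolding cycle_dist_def antipode_level_def by auto
  have before_m: "cycle_dist d i j (m - 1) = path_pos d (m - 1) - path_pos d i" if "i < m"
  proof -
    have "path_pos d (m - 1) + path_pos d (m - 1) < antipode_level d i j" using lt that by auto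
    then show ?thesis unfolding cycle_dist_def antipode_level_def by (simp add: min_def)
  qed
  have "?v = cycle_dist d i j m \<or> i < m \<and> ?v = cycle_dist d i j (m - 1)"
    using at_m before_m by (auto simp: max_def)
  moreover have "m \<in> {i..j}" "i < m \<Longrightarrow> m - 1 \<in> {i..j}" using ij by auto
  ultimately show "?v \<in> cycle_dist d i j ` {i..j}" by blast
qed

lemma tail_ecc_antimono:
  assumes "1 \<le> i" "i \<le> j" "j \<le> j'" "j' \<le> n"
  shows "tail_ecc d n i j' \<le> tail_ecc d n i j"
proof -
  have "- tail_ecc d n i k \<le> - tail_ecc d n i (Suc k)" if "i \<le> k" "k < n" for k
  proof -
    have "d i (Suc k) \<le> d i k + d k (Suc k)" using dist_triangle[of i "Suc k" k] assms that by auto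
    then show ?thesis unfolding tail_ecc_def using path_pos_Suc[of k d] assms that by simp
  qed
  then have "- tail_ecc d n i j \<le> - tail_ecc d n i j'"
    by (rule Suc_mono_between[of i n "\<lambda>k. - tail_ecc d n i k"]) (use assms in auto)
  then show ?thesis by simp
qed

lemma cycle_ecc_mono:
  assumes "1 \<le> i" "i \<le> j" "j \<le> j'" "j' \<le> n"
  shows "cycle_ecc d i j \<le> cycle_ecc d i j'"
proof (rule Suc_mono_between[of j n "cycle_ecc d i"])
  fix k assume k: "j \<le> k" "k < n"
  obtain l where l: "l \<in> {i..k}" "cycle_ecc d i k = cycle_dist d i k l"
    using cycle_ecc_attained[of i k] assms k by auto
  have "d i k \<le> d i (Suc k) + d (Suc k) k" using dist_triangle[of i k "Suc k"] assms k by auto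
  moreover have "d (Suc k) k = d k (Suc k)" using dist_sym[of "Suc k" k] assms k by auto
  ultimately have "cycle_dist d i k l \<le> cycle_dist d i (Suc k) l"
    unfolding cycle_dist_def using path_pos_Suc[of k d] assms k by (auto simp: min_def)
  also have "\<dots> \<le> cycle_ecc d i (Suc k)" using cycle_dist_le_cycle_ecc[of i l "Suc k" d] l by auto
  finally show "cycle_ecc d i k \<le> cycle_ecc d i (Suc k)" using l by simp
qed (use assms in auto)

text \<open>This lets the first \<open>j\<close> with \<open>tail_ecc \<le> cycle_ecc\<close> can only move to the right when \<open>i\<close>
  grows.\<close>

lemma ecc_gap_Suc_le:
  assumes "1 \<le> i" "i < j" "j \<le> n"
  shows "cycle_ecc d (Suc i) j - tail_ecc d n (Suc i) j \<le> cycle_ecc d i j - tail_ecc d n i j"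
proof -
  obtain k where k: "k \<in> {Suc i..j}" "cycle_ecc d (Suc i) j = cycle_dist d (Suc i) j k"
    by (rule cycle_ecc_attained[of "Suc i" j d]) (use assms in auto)
  have "d i j \<le> d i (Suc i) + d (Suc i) j" using dist_triangle[of i j "Suc i"] assms by auto
  then have "cycle_dist d (Suc i) j k \<le> cycle_dist d i j k + (d (Suc i) j - d i j)"
    unfolding cycle_dist_def using path_pos_Suc[of i d] assms by (auto simp: min_def)
  also have "cycle_dist d i j k \<le> cycle_ecc d i j" using cycle_dist_le_cycle_ecc[of i k j d] k by auto
  finally show ?thesis using k unfolding tail_ecc_def by simp
qed

lemma antipode_level_le_Suc_left:
  assumes "1 \<le> i" "i < n" "1 \<le> j" "j \<le> n"
  shows "antipode_level d i j \<le> antipode_level d (Suc i) j"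
proof -
  have "d i j \<le> d i (Suc i) + d (Suc i) j" using dist_triangle[of i j "Suc i"] assms by auto
  then show ?thesis unfolding antipode_level_def using path_pos_Suc[of i d] assms by simp
qed

lemma antipode_level_mono_right:
  assumes "1 \<le> i" "i \<le> n" "1 \<le> j" "j \<le> j'" "j' \<le> n"
  shows "antipode_level d i j \<le> antipode_level d i j'"
proof (rule Suc_mono_between[of 1 n "antipode_level d i"])
  fix k assume k: "1 \<le> k" "k < n"
  have "d i k \<le> d i (Suc k) + d (Suc k) k" using dist_triangle[of i k "Suc k"] assms k by auto
  moreover have "d (Suc k) k = d k (Suc k)" using dist_sym[of "Suc k" k] assms k by auto
  ultimately show "antipode_level d i k \<le> antipode_level d i (Suc k)"
    unfolding antipode_level_def using path_pos_Suc[of k d] k by simp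
qed (use assms in auto)

lemma lam_eqI:
  assumes "j \<in> {i..n}" and "\<And>j'. j' \<in> {i..n} \<Longrightarrow> ecc d n i j \<le> ecc d n i j'"
  shows "lam d n i = ecc d n i j"
  unfolding lam_def by (rule Min_eqI) (use assms in auto)

text \<open>Before the crossing point \<open>c\<close> the eccentricity is the decreasing tail length, from \<open>c\<close>
  on it is at least the increasing cycle eccentricity; so the minimum sits at \<open>c - 1\<close> or \<open>c\<close>.\<close>

lemma lam_at_crossing:
  assumes ic: "1 \<le> i" "i \<le> c" "c \<le> n"
    and before: "\<forall>j\<in>{i..<c}. cycle_ecc d i j < tail_ecc d n i j"
    and at: "tail_ecc d n i c \<le> cycle_ecc d i c"
  shows "lam d n i =
           (if i < c \<and> \<not> cycle_ecc d i c \<le> tail_ecc d n i (c - 1)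
            then tail_ecc d n i (c - 1) else cycle_ecc d i c)
     \<and> ecc d n i (if i < c \<and> \<not> cycle_ecc d i c \<le> tail_ecc d n i (c - 1) then c - 1 else c) =
           (if i < c \<and> \<not> cycle_ecc d i c \<le> tail_ecc d n i (c - 1)
            then tail_ecc d n i (c - 1) else cycle_ecc d i c)"
proof -
  have before_c: "ecc d n i j = tail_ecc d n i j" "tail_ecc d n i (c - 1) \<le> tail_ecc d n i j"
    if "i \<le> j" "j < c" for j
    using ecc_eq_max[of i j] before tail_ecc_antimono[of i j "c - 1"] ic that by auto
  have from_c: "cycle_ecc d i c \<le> ecc d n i j" if "c \<le> j" "j \<le> n" for j
    using ecc_eq_max[of i j] cycle_ecc_mono[of i c j] ic that by auto
  show ?thesis
  proof (cases "i < c \<and> \<not> cycle_ecc d i c \<le> tail_ecc d n i (c - 1)")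
    case True
    have "lam d n i = ecc d n i (c - 1)"
    proof (rule lam_eqI)
      fix j assume "j \<in> {i..n}"
      then show "ecc d n i (c - 1) \<le> ecc d n i j"
        using before_c[of "c - 1"] before_c[of j] from_c[of j] True by (cases "j < c") auto
    qed (use True ic in auto)
    then show ?thesis using before_c[of "c - 1"] True by auto
  next
    case False
    have "lam d n i = ecc d n i c"
    proof (rule lam_eqI)
      fix j assume "j \<in> {i..n}"
      then show "ecc d n i c \<le> ecc d n i j"
        using ecc_eq_max[OF ic] at before_c[of j] from_c[of j] False by (cases "j < c") auto
    qed (use ic in auto)
    then show ?thesis using ecc_eq_max[OF ic] at False by auto
  qed
qed

end

section \<open>The program\<close>

text \<open>Integer cells: \<open>0\<close> holds \<open>n\<close>; \<open>-1\<close> the index \<open>i\<close>; \<open>-2\<close> the candidate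
  \<open>c\<close> for \<open>j(i)\<close>; \<open>-3\<close> the antipode pointer \<open>m\<close>; \<open>-4\<close> the counter of the prefix-sum pass;
  \<open>-5\<close>, \<open>-6\<close>, \<open>-10\<close> the constants \<open>1\<close>, \<open>-20\<close>, \<open>0\<close>; \<open>-7\<close>, \<open>-9\<close> are scratch.
  Real cells: \<open>-20 - k\<close> holds \<open>S\<^sub>k\<close>, \<open>-8\<close> holds \<open>S\<^sub>n\<close>, \<open>-11\<close> the constant \<open>0\<close>,
  \<open>-4\<close> the cycle eccentricity of the current candidate; the others above \<open>-12\<close> are scratch.
  All working cells are non-positive, so they never clash with the output cells \<open>1..n\<close>.\<close>

definition prog :: "instr list" where
"prog = [
 \<comment> \<open>0: constants\<close>
 IConst (-5) 1,
 IConst (-6) (-20),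
 IConst (-4) 1,
 \<comment> \<open>3: prefix sums S_k\<close>
 IJumpLe 0 (-4) 13,
 ISub (-7) (-6) (-4),
 RLoad (-6) (-7),
 IAdd (-9) (-4) (-5),
 Dist (-7) (-4) (-9),
 RAdd (-6) (-6) (-7),
 ISub (-7) (-6) (-9),
 RStore (-7) (-6),
 IAdd (-4) (-4) (-5),
 IJumpLe (-4) (-4) 3,
 \<comment> \<open>13: S_n, then i = c = m = 1\<close>
 ISub (-7) (-6) 0,
 RLoad (-8) (-7),
 IConst (-1) 1,
 IConst (-2) 1,
 IConst (-3) 1,
 \<comment> \<open>18: outer loop over i\<close>
 IJumpLe (-1) 0 20,
 Halt,
 IJumpLe (-1) (-2) 22,
 IAdd (-2) (-1) (-10),
 \<comment> \<open>22: candidate c\<close>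
 Dist (-1) (-1) (-2),
 ISub (-7) (-6) (-1),
 RLoad (-6) (-7),
 ISub (-7) (-6) (-2),
 RLoad (-7) (-7),
 RAdd (-2) (-6) (-7),
 RAdd (-2) (-2) (-1),
 IJumpLe (-1) (-3) 31,
 IAdd (-3) (-1) (-10),
 \<comment> \<open>31: advance the antipode pointer m\<close>
 ISub (-7) (-6) (-3),
 RLoad (-9) (-7),
 RAdd (-3) (-9) (-9),
 RJumpLe (-2) (-3) 37,
 IAdd (-3) (-3) (-5),
 IJumpLe (-3) (-3) 31,
 \<comment> \<open>37: cycle eccentricity of c\<close>
 RSub (-4) (-7) (-9),
 RAdd (-4) (-4) (-1),
 IJumpLe (-3) (-1) 46,
 ISub (-9) (-3) (-5),
 ISub (-7) (-6) (-9),
 RLoad (-10) (-7),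
 RSub (-10) (-10) (-6),
 RJumpLe (-10) (-4) 46,
 RAdd (-4) (-10) (-11),
 \<comment> \<open>46: compare with the tail length of c\<close>
 RSub (-5) (-8) (-7),
 RAdd (-5) (-5) (-1),
 RJumpLe (-5) (-4) 51,
 IAdd (-2) (-2) (-5),
 IJumpLe (-2) (-2) 22,
 \<comment> \<open>51: choose c - 1 or c, write the outputs\<close>
 IJumpLe (-2) (-1) 62,
 ISub (-9) (-2) (-5),
 Dist (-10) (-1) (-9),
 ISub (-7) (-6) (-9),
 RLoad (-7) (-7),
 RSub (-5) (-8) (-7),
 RAdd (-5) (-5) (-10),
 RJumpLe (-4) (-5) 62,
 RStore (-1) (-5),
 IStore (-1) (-9),
 IJumpLe (-1) (-1) 64,
 RStore (-1) (-4),
 IStore (-1) (-2),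
 IAdd (-1) (-1) (-5),
 IJumpLe (-1) (-1) 18
]"

lemma length_prog: "length prog = 66"
  by (simp add: prog_def)

lemmas prog_nth [simp] = arg_cong[where f = "\<lambda>xs. xs ! k", OF prog_def] for k

lemma step_eq:
  "p < 66 \<Longrightarrow> step prog d (p, im, rm) =
     (if prog ! p = Halt then (p, im, rm) else exec (prog ! p) d (p, im, rm))"
  by (simp add: step_def halted_def length_prog)

abbreviation frame :: "(int \<Rightarrow> int) \<Rightarrow> (int \<Rightarrow> real) \<Rightarrow> (int \<Rightarrow> int) \<Rightarrow> (int \<Rightarrow> real) \<Rightarrow> bool" where
  "frame im rm im' rm' \<equiv> \<forall>a>0. im' a = im a \<and> rm' a = rm a"

definition mem_inv :: "(nat \<Rightarrow> nat \<Rightarrow> real) \<Rightarrow> nat \<Rightarrow> (int \<Rightarrow> int) \<Rightarrow> (int \<Rightarrow> real) \<Rightarrow> bool" where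
  "mem_inv d n im rm \<longleftrightarrow> im 0 = int n \<and> im (-5) = 1 \<and> im (-6) = -20 \<and> im (-10) = 0 \<and>
     rm (-11) = 0 \<and> rm (-8) = path_pos d n \<and> (\<forall>k\<in>{1..n}. rm (-20 - int k) = path_pos d k)"

lemma mem_inv_im_upd [simp]:
  "a \<noteq> 0 \<Longrightarrow> a \<noteq> -5 \<Longrightarrow> a \<noteq> -6 \<Longrightarrow> a \<noteq> -10 \<Longrightarrow>
   mem_inv d n (im(a := v)) rm = mem_inv d n im rm"
  unfolding mem_inv_def by auto

lemma mem_inv_rm_upd [simp]:
  "-12 < a \<Longrightarrow> a \<noteq> -8 \<Longrightarrow> a \<noteq> -11 \<Longrightarrow> mem_inv d n im (rm(a := v)) = mem_inv d n im rm"
  unfolding mem_inv_def by auto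

lemma mem_inv_path_pos:
  "mem_inv d n im rm \<Longrightarrow> 1 \<le> k \<Longrightarrow> k \<le> n \<Longrightarrow> rm (-20 - int k) = path_pos d k"
  unfolding mem_inv_def by auto

definition output_ok :: "(nat \<Rightarrow> nat \<Rightarrow> real) \<Rightarrow> nat \<Rightarrow> nat \<Rightarrow> (int \<Rightarrow> int) \<Rightarrow> (int \<Rightarrow> real) \<Rightarrow> bool" where
  "output_ok d n i im rm \<longleftrightarrow> rm (int i) = lam d n i \<and> int i \<le> im (int i) \<and> im (int i) \<le> int n \<and>
     ecc d n i (nat (im (int i))) = lam d n i"

definition outputs_below :: "(nat \<Rightarrow> nat \<Rightarrow> real) \<Rightarrow> nat \<Rightarrow> nat \<Rightarrow> (int \<Rightarrow> int) \<Rightarrow> (int \<Rightarrow> real) \<Rightarrow> bool" where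
  "outputs_below d n i im rm \<longleftrightarrow> (\<forall>i'\<in>{1..<i}. output_ok d n i' im rm)"

text \<open>The state of the two-pointer search: \<open>c\<close> has not passed the crossing point of \<open>i\<close>,
  and \<open>m\<close> has not passed the antipode of \<open>v\<^sub>i\<close> on the cycle of \<open>G(i,c)\<close>.\<close>

definition search_inv ::
  "(nat \<Rightarrow> nat \<Rightarrow> real) \<Rightarrow> nat \<Rightarrow> nat \<Rightarrow> nat \<Rightarrow> nat \<Rightarrow> (int \<Rightarrow> int) \<Rightarrow> (int \<Rightarrow> real) \<Rightarrow> bool" where
  "search_inv d n i c m im rm \<longleftrightarrow> mem_inv d n im rm \<and> im (-2) = int c \<and> im (-3) = int m \<and>
     1 \<le> m \<and> m \<le> c \<and> c \<le> n \<and>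
     (\<forall>j\<in>{i..<c}. cycle_ecc d i j < tail_ecc d n i j) \<and>
     (\<forall>k\<in>{i..<m}. path_pos d k + path_pos d k < antipode_level d i c)"

definition outer_inv ::
  "(nat \<Rightarrow> nat \<Rightarrow> real) \<Rightarrow> nat \<Rightarrow> nat \<Rightarrow> nat \<Rightarrow> nat \<Rightarrow> (int \<Rightarrow> int) \<Rightarrow> (int \<Rightarrow> real) \<Rightarrow> bool" where
  "outer_inv d n i c m im rm \<longleftrightarrow> search_inv d n i c m im rm \<and> outputs_below d n i im rm \<and>
     im (-1) = int i \<and> 1 \<le> i \<and> i \<le> Suc n"

definition prefix_inv :: "(nat \<Rightarrow> nat \<Rightarrow> real) \<Rightarrow> nat \<Rightarrow> nat \<Rightarrow> (int \<Rightarrow> int) \<Rightarrow> (int \<Rightarrow> real) \<Rightarrow> bool" where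
  "prefix_inv d n k im rm \<longleftrightarrow> im 0 = int n \<and> im (-5) = 1 \<and> im (-6) = -20 \<and> im (-10) = 0 \<and>
     im (-4) = int k \<and> rm (-11) = 0 \<and> (\<forall>k'\<in>{1..k}. rm (-20 - int k') = path_pos d k') \<and>
     1 \<le> k \<and> k \<le> n"

lemma run_init:
  "\<exists>im rm. (step prog d ^^ 3) (init n) = (3, im, rm) \<and> (1 \<le> n \<longrightarrow> prefix_inv d n 1 im rm)"
  by (simp add: init_def funpow_numeral step_eq prefix_inv_def)

lemma run_prefix_step:
  assumes P: "prefix_inv d n k im rm" and k: "k < n"
  shows "\<exists>im' rm'. (step prog d ^^ 10) (3, im, rm) = (3, im', rm') \<and> prefix_inv d n (Suc k) im' rm'"
proof -
  have "rm (-20 - int k) = path_pos d k" using P unfolding prefix_inv_def by auto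
  moreover have "1 - int k' = - int k \<longleftrightarrow> k' = Suc k" for k'
    \<comment> \<open>the pass writes \<open>S\<^sub>k\<^sub>+\<^sub>1\<close> to the address \<open>-20 - (k + 1)\<close>\<close>
    by linarith
  ultimately show ?thesis
    using P k path_pos_Suc[of k d]
    by (auto simp: funpow_numeral step_eq prefix_inv_def nat_add_distrib le_Suc_eq)
qed

lemma run_prefix_loop:
  "prefix_inv d n k im rm \<Longrightarrow>
   \<exists>t im' rm'. (step prog d ^^ t) (3, im, rm) = (13, im', rm') \<and> prefix_inv d n n im' rm' \<and>
     t + 10 * k \<le> 10 * n + 1"
proof (induction "n - k" arbitrary: k im rm rule: less_induct)
  case less
  show ?case
  proof (cases "k < n")
    case True
    obtain im1 rm1 where first: "(step prog d ^^ 10) (3, im, rm) = (3, im1, rm1)"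
      and inv: "prefix_inv d n (Suc k) im1 rm1"
      using run_prefix_step[OF less.prems True] by blast
    obtain t im' rm' where "(step prog d ^^ t) (3, im1, rm1) = (13, im', rm')"
      "prefix_inv d n n im' rm'" "t + 10 * Suc k \<le> 10 * n + 1"
      using less.hyps[OF _ inv] True by (meson diff_less_mono2 lessI)
    then show ?thesis using funpow_trans[OF first] by (intro exI[of _ "10 + t"]) auto
  next
    case False
    with less.prems have "k = n" "(step prog d ^^ 1) (3, im, rm) = (13, im, rm)"
      by (auto simp: prefix_inv_def step_eq)
    with less.prems show ?thesis by (intro exI[of _ 1]) auto
  qed
qed

lemma run_outer_setup:
  assumes "prefix_inv d n n im rm"
  shows "\<exists>im' rm'. (step prog d ^^ 5) (13, im, rm) = (18, im', rm') \<and> outer_inv d n 1 1 1 im' rm'"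
proof -
  have "rm (-20 - int n) = path_pos d n" using assms unfolding prefix_inv_def by auto
  then show ?thesis
    using assms
    by (simp add: funpow_numeral step_eq prefix_inv_def outer_inv_def search_inv_def mem_inv_def
        outputs_below_def)
qed

lemma run_outer_head:
  assumes "im (-1) = int i" "im (-2) = int c" "im 0 = int n" "im (-10) = 0" "i \<le> n"
  shows "\<exists>t. t \<le> 3 \<and> (step prog d ^^ t) (18, im, rm) = (22, im(-2 := int (max c i)), rm)"
proof (cases "i \<le> c")
  case True
  then have "im(-2 := int (max c i)) = im" using assms by auto
  then show ?thesis using assms True by (intro exI[of _ 2]) (simp add: funpow_numeral step_eq)
next
  case False
  then show ?thesis using assms by (intro exI[of _ 3]) (simp add: funpow_numeral step_eq)
qed

lemma run_load_candidate:
  assumes M: "mem_inv d n im rm" and r: "im (-1) = int i" "im (-2) = int c" "im (-3) = int m"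
    and ic: "1 \<le> i" "i \<le> c" "c \<le> n"
  shows "\<exists>t im' rm'. (step prog d ^^ t) (22, im, rm) = (31, im', rm') \<and> t \<le> 9 \<and>
     mem_inv d n im' rm' \<and> im' (-1) = int i \<and> im' (-2) = int c \<and> im' (-3) = int (max m i) \<and>
     rm' (-1) = d i c \<and> rm' (-2) = antipode_level d i c \<and> rm' (-6) = path_pos d i \<and>
     rm' (-7) = path_pos d c \<and> frame im rm im' rm'"
proof -
  have "rm (-20 - int i) = path_pos d i" "rm (-20 - int c) = path_pos d c"
    using mem_inv_path_pos[OF M] ic by auto
  then show ?thesis
    using M r by (cases "i \<le> m"; intro exI[of _ 8] exI[of _ 9])
      (simp_all add: funpow_numeral step_eq antipode_level_def mem_inv_def)
qed

lemma run_antipode_stop: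
  assumes "mem_inv d n im rm" "im (-3) = int m" "rm (-2) = antipode_level d i c" "1 \<le> m" "m \<le> n"
    and "antipode_level d i c \<le> path_pos d m + path_pos d m"
  shows "(step prog d ^^ 4) (31, im, rm) =
           (37, im(-7 := -20 - int m), rm(-9 := path_pos d m, -3 := path_pos d m + path_pos d m))"
  using assms mem_inv_path_pos[OF assms(1,4,5)] by (simp add: funpow_numeral step_eq mem_inv_def)

lemma run_antipode_advance:
  assumes "mem_inv d n im rm" "im (-3) = int m" "rm (-2) = antipode_level d i c" "1 \<le> m" "m \<le> n"
    and "\<not> antipode_level d i c \<le> path_pos d m + path_pos d m"
  shows "(step prog d ^^ 6) (31, im, rm) =
           (31, im(-7 := -20 - int m, -3 := int m + 1),
            rm(-9 := path_pos d m, -3 := path_pos d m + path_pos d m))"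
  using assms mem_inv_path_pos[OF assms(1,4,5)] by (simp add: funpow_numeral step_eq mem_inv_def)

lemma run_antipode_search:
  assumes "mem_inv d n im rm" "im (-3) = int m" "rm (-2) = antipode_level d i c"
    and "1 \<le> m" "m \<le> c" "c \<le> n"
    and "\<forall>k\<in>{i..<m}. path_pos d k + path_pos d k < antipode_level d i c"
    and "antipode_level d i c \<le> path_pos d c + path_pos d c"
  shows "\<exists>m'. m \<le> m' \<and> m' \<le> c \<and>
     (\<forall>k\<in>{i..<m'}. path_pos d k + path_pos d k < antipode_level d i c) \<and>
     antipode_level d i c \<le> path_pos d m' + path_pos d m' \<and>
     (step prog d ^^ (6 * (m' - m) + 4)) (31, im, rm) =
       (37, im(-7 := -20 - int m', -3 := int m'),
        rm(-9 := path_pos d m', -3 := path_pos d m' + path_pos d m'))"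
  using assms
proof (induction "c - m" arbitrary: m im rm rule: less_induct)
  case less
  show ?case
  proof (cases "antipode_level d i c \<le> path_pos d m + path_pos d m")
    case True
    then show ?thesis
      using run_antipode_stop[of d n im rm m i c] less.prems by (intro exI[of _ m]) auto
  next
    case False
    let ?im = "im(-7 := -20 - int m, -3 := int m + 1)"
    let ?rm = "rm(-9 := path_pos d m, -3 := path_pos d m + path_pos d m)"
    have "m < c" using False less.prems by (cases "m = c") auto
    have step: "(step prog d ^^ 6) (31, im, rm) = (31, ?im, ?rm)"
      using run_antipode_advance[of d n im rm m i c] less.prems False by auto
    obtain m' where m': "Suc m \<le> m'" "m' \<le> c"
      "\<forall>k\<in>{i..<m'}. path_pos d k + path_pos d k < antipode_level d i c"
      "antipode_level d i c \<le> path_pos d m' + path_pos d m'"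
      "(step prog d ^^ (6 * (m' - Suc m) + 4)) (31, ?im, ?rm) =
         (37, ?im(-7 := -20 - int m', -3 := int m'),
          ?rm(-9 := path_pos d m', -3 := path_pos d m' + path_pos d m'))"
      using less.hyps[of "Suc m" ?im ?rm] \<open>m < c\<close> less.prems False
      by (fastforce simp: less_Suc_eq)
    have "6 * (m' - m) + 4 = 6 + (6 * (m' - Suc m) + 4)" using m'(1) by simp
    then show ?thesis
      using funpow_trans[OF step m'(5)] m' by (intro exI[of _ m']) (auto simp: fun_upd_twist)
  qed
qed

lemma run_cycle_ecc:
  assumes M: "mem_inv d n im rm" and r: "im (-1) = int i" "im (-2) = int c" "im (-3) = int m"
    "rm (-1) = d i c" "rm (-6) = path_pos d i" "rm (-7) = path_pos d c" "rm (-9) = path_pos d m"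
    and ic: "1 \<le> i" "i \<le> m" "m \<le> c" "c \<le> n"
  shows "\<exists>t im' rm'. (step prog d ^^ t) (37, im, rm) = (46, im', rm') \<and> t \<le> 9 \<and>
     mem_inv d n im' rm' \<and> im' (-1) = int i \<and> im' (-2) = int c \<and> im' (-3) = int m \<and>
     rm' (-1) = d i c \<and> rm' (-7) = path_pos d c \<and> frame im rm im' rm' \<and>
     rm' (-4) = (if m \<le> i then d i c + path_pos d c - path_pos d m
                 else max (d i c + path_pos d c - path_pos d m) (path_pos d (m - 1) - path_pos d i))"
proof (cases "m \<le> i")
  case True
  then show ?thesis
    using M r by (intro exI[of _ 3]) (simp add: funpow_numeral step_eq mem_inv_def)
next
  case False
  have "rm (-20 - (int m - 1)) = path_pos d (m - 1)"
    using mem_inv_path_pos[OF M, of "m - 1"] ic False by simp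
  then show ?thesis
    using M r False
    by (cases "path_pos d (m - 1) - path_pos d i \<le> d i c + path_pos d c - path_pos d m";
        intro exI[of _ 8] exI[of _ 9]) (simp_all add: funpow_numeral step_eq mem_inv_def max_def)
qed

lemma run_tail_test_stop:
  assumes "mem_inv d n im rm" "rm (-1) = d i c" "rm (-4) = g" "rm (-7) = path_pos d c"
    and "tail_ecc d n i c \<le> g"
  shows "\<exists>rm'. (step prog d ^^ 3) (46, im, rm) = (51, im, rm') \<and> mem_inv d n im rm' \<and>
     rm' (-4) = g \<and> frame im rm im rm'"
  using assms by (simp add: funpow_numeral step_eq mem_inv_def tail_ecc_def)

lemma run_tail_test_advance:
  assumes "mem_inv d n im rm" "rm (-1) = d i c" "rm (-4) = g" "rm (-7) = path_pos d c"
    "im (-2) = int c" and "\<not> tail_ecc d n i c \<le> g"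
  shows "\<exists>rm'. (step prog d ^^ 5) (46, im, rm) = (22, im(-2 := int c + 1), rm') \<and>
     mem_inv d n im rm' \<and> frame im rm im rm'"
  using assms by (simp add: funpow_numeral step_eq mem_inv_def tail_ecc_def)

lemma run_store_output:
  assumes M: "mem_inv d n im rm"
    and r: "im (-1) = int i" "im (-2) = int c" "im (-3) = int m" "rm (-4) = g"
    and ic: "1 \<le> i" "i \<le> c" "c \<le> n"
  shows "\<exists>t im' rm'. (step prog d ^^ t) (51, im, rm) = (18, im', rm') \<and> t \<le> 13 \<and>
     mem_inv d n im' rm' \<and> im' (-1) = int (Suc i) \<and> im' (-2) = int c \<and> im' (-3) = int m \<and>
     rm' (int i) = (if i < c \<and> \<not> g \<le> tail_ecc d n i (c - 1) then tail_ecc d n i (c - 1) else g) \<and>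
     im' (int i) = int (if i < c \<and> \<not> g \<le> tail_ecc d n i (c - 1) then c - 1 else c) \<and>
     (\<forall>a>0. a \<noteq> int i \<longrightarrow> im' a = im a \<and> rm' a = rm a)"
proof (cases "c \<le> i")
  case True
  then show ?thesis
    using M r ic by (intro exI[of _ 5]) (simp add: funpow_numeral step_eq mem_inv_def)
next
  case False
  have "rm (-20 - (int c - 1)) = path_pos d (c - 1)" "nat (int c - 1) = c - 1"
    using mem_inv_path_pos[OF M, of "c - 1"] ic False by auto
  then show ?thesis
    using M r ic False
    by (cases "g \<le> tail_ecc d n i (c - 1)"; intro exI[of _ 12] exI[of _ 13])
      (simp_all add: funpow_numeral step_eq mem_inv_def tail_ecc_def)
qed

context path_metric
begin

lemma run_eval_candidate:
  assumes S: "search_inv d n i c m im rm" and r: "im (-1) = int i" and ic: "1 \<le> i" "i \<le> c"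
  shows "\<exists>t im' rm' m'. (step prog d ^^ t) (22, im, rm) = (46, im', rm') \<and> m \<le> m' \<and>
     t + 6 * m \<le> 6 * m' + 22 \<and> search_inv d n i c m' im' rm' \<and> im' (-1) = int i \<and>
     rm' (-1) = d i c \<and> rm' (-4) = cycle_ecc d i c \<and> rm' (-7) = path_pos d c \<and> frame im rm im' rm'"
proof -
  note S' = S[unfolded search_inv_def]
  obtain tA imA rmA where A: "(step prog d ^^ tA) (22, im, rm) = (31, imA, rmA)" "tA \<le> 9"
    "mem_inv d n imA rmA" "imA (-1) = int i" "imA (-2) = int c" "imA (-3) = int (max m i)"
    "rmA (-1) = d i c" "rmA (-2) = antipode_level d i c" "rmA (-6) = path_pos d i"
    "rmA (-7) = path_pos d c" "frame im rm imA rmA"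
    using run_load_candidate[of d n im rm i c m] S' r ic by auto
  have top: "antipode_level d i c \<le> path_pos d c + path_pos d c"
    using dist_le_path_pos_diff[of i c] S' ic unfolding antipode_level_def by simp
  have before: "\<forall>k\<in>{i..<max m i}. path_pos d k + path_pos d k < antipode_level d i c"
    using S' by (auto simp: max_def)
  have "\<exists>m'. max m i \<le> m' \<and> m' \<le> c \<and>
      (\<forall>k\<in>{i..<m'}. path_pos d k + path_pos d k < antipode_level d i c) \<and>
      antipode_level d i c \<le> path_pos d m' + path_pos d m' \<and>
      (step prog d ^^ (6 * (m' - max m i) + 4)) (31, imA, rmA) =
        (37, imA(-7 := -20 - int m', -3 := int m'),
         rmA(-9 := path_pos d m', -3 := path_pos d m' + path_pos d m'))"
    by (rule run_antipode_search) (use A S' ic top before in auto)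
  then obtain m' where M: "max m i \<le> m'" "m' \<le> c"
    "\<forall>k\<in>{i..<m'}. path_pos d k + path_pos d k < antipode_level d i c"
    "antipode_level d i c \<le> path_pos d m' + path_pos d m'"
    "(step prog d ^^ (6 * (m' - max m i) + 4)) (31, imA, rmA) =
       (37, imA(-7 := -20 - int m', -3 := int m'),
        rmA(-9 := path_pos d m', -3 := path_pos d m' + path_pos d m'))"
    by blast
  let ?imM = "imA(-7 := -20 - int m', -3 := int m')"
  let ?rmM = "rmA(-9 := path_pos d m', -3 := path_pos d m' + path_pos d m')"
  have state: "mem_inv d n ?imM ?rmM" "?imM (-1) = int i" "?imM (-2) = int c" "?imM (-3) = int m'"
    "?rmM (-1) = d i c" "?rmM (-6) = path_pos d i" "?rmM (-7) = path_pos d c"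
    "?rmM (-9) = path_pos d m'"
    using A by simp_all
  have "i \<le> m'" "c \<le> n" using M(1) S' by simp_all
  then obtain tG imG rmG where G: "(step prog d ^^ tG) (37, ?imM, ?rmM) = (46, imG, rmG)" "tG \<le> 9"
    "mem_inv d n imG rmG" "imG (-1) = int i" "imG (-2) = int c" "imG (-3) = int m'"
    "rmG (-1) = d i c" "rmG (-7) = path_pos d c" "frame ?imM ?rmM imG rmG"
    "rmG (-4) = (if m' \<le> i then d i c + path_pos d c - path_pos d m'
       else max (d i c + path_pos d c - path_pos d m') (path_pos d (m' - 1) - path_pos d i))"
    using run_cycle_ecc[OF state ic(1) _ M(2)] by blast
  have "rmG (-4) = cycle_ecc d i c"
    using G(10) cycle_ecc_antipode[of i m' c] M S' ic by simp
  moreover have "search_inv d n i c m' imG rmG"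
    using G M S' ic unfolding search_inv_def by auto
  moreover have "(step prog d ^^ (tA + (6 * (m' - max m i) + 4) + tG)) (22, im, rm) = (46, imG, rmG)"
    using funpow_trans[OF funpow_trans[OF A(1) M(5)] G(1)] .
  ultimately show ?thesis
    using A G M by (intro exI[of _ "tA + (6 * (m' - max m i) + 4) + tG"] exI[of _ m']) auto
qed

lemma run_finish_candidate:
  assumes S: "search_inv d n i c m im rm"
    and r: "im (-1) = int i" "rm (-1) = d i c" "rm (-4) = cycle_ecc d i c" "rm (-7) = path_pos d c"
    and ic: "1 \<le> i" "i \<le> c" and at: "tail_ecc d n i c \<le> cycle_ecc d i c"
  shows "\<exists>t im' rm'. (step prog d ^^ t) (46, im, rm) = (18, im', rm') \<and> t \<le> 16 \<and>
     search_inv d n i c m im' rm' \<and> im' (-1) = int (Suc i) \<and> output_ok d n i im' rm' \<and>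
     (\<forall>a>0. a \<noteq> int i \<longrightarrow> im' a = im a \<and> rm' a = rm a)"
proof -
  note S' = S[unfolded search_inv_def]
  obtain rmT where T: "(step prog d ^^ 3) (46, im, rm) = (51, im, rmT)" "mem_inv d n im rmT"
    "rmT (-4) = cycle_ecc d i c" "frame im rm im rmT"
    using run_tail_test_stop[of d n im rm i c] S' r at by auto
  obtain t imO rmO where O: "(step prog d ^^ t) (51, im, rmT) = (18, imO, rmO)" "t \<le> 13"
    "mem_inv d n imO rmO" "imO (-1) = int (Suc i)" "imO (-2) = int c" "imO (-3) = int m"
    "rmO (int i) = (if i < c \<and> \<not> cycle_ecc d i c \<le> tail_ecc d n i (c - 1)
                    then tail_ecc d n i (c - 1) else cycle_ecc d i c)"
    "imO (int i) = int (if i < c \<and> \<not> cycle_ecc d i c \<le> tail_ecc d n i (c - 1) then c - 1 else c)"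
    "\<forall>a>0. a \<noteq> int i \<longrightarrow> imO a = im a \<and> rmO a = rmT a"
    using run_store_output[of d n im rmT i c m] T S' r ic by auto
  have "output_ok d n i imO rmO"
    using lam_at_crossing[of i c] O(7,8) S' ic at
    unfolding output_ok_def by (auto split: if_splits)
  moreover have "search_inv d n i c m imO rmO"
    using O S' unfolding search_inv_def by auto
  ultimately show ?thesis
    using funpow_trans[OF T(1) O(1)] O T by (intro exI[of _ "3 + t"]) auto
qed

lemma run_candidate_loop:
  "search_inv d n i c m im rm \<Longrightarrow> im (-1) = int i \<Longrightarrow> 1 \<le> i \<Longrightarrow> i \<le> c \<Longrightarrow>
   \<exists>t im' rm' c' m'. (step prog d ^^ t) (22, im, rm) = (18, im', rm') \<and> c \<le> c' \<and>
     t + 100 * c + 20 * m \<le> 100 * c' + 20 * m' + 60 \<and> search_inv d n i c' m' im' rm' \<and>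
     im' (-1) = int (Suc i) \<and> output_ok d n i im' rm' \<and>
     (\<forall>a>0. a \<noteq> int i \<longrightarrow> im' a = im a \<and> rm' a = rm a)"
proof (induction "n - c" arbitrary: c m im rm rule: less_induct)
  case less
  obtain t1 im1 rm1 m1 where E: "(step prog d ^^ t1) (22, im, rm) = (46, im1, rm1)" "m \<le> m1"
    "t1 + 6 * m \<le> 6 * m1 + 22" "search_inv d n i c m1 im1 rm1" "im1 (-1) = int i"
    "rm1 (-1) = d i c" "rm1 (-4) = cycle_ecc d i c" "rm1 (-7) = path_pos d c" "frame im rm im1 rm1"
    using run_eval_candidate[OF less.prems] by blast
  show ?case
  proof (cases "tail_ecc d n i c \<le> cycle_ecc d i c")
    case True
    obtain t2 im2 rm2 where F: "(step prog d ^^ t2) (46, im1, rm1) = (18, im2, rm2)" "t2 \<le> 16"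
      "search_inv d n i c m1 im2 rm2" "im2 (-1) = int (Suc i)" "output_ok d n i im2 rm2"
      "\<forall>a>0. a \<noteq> int i \<longrightarrow> im2 a = im1 a \<and> rm2 a = rm1 a"
      using run_finish_candidate[OF E(4-8) less.prems(3,4) True] by blast
    show ?thesis
      using funpow_trans[OF E(1) F(1)] E F
      by (intro exI[of _ "t1 + t2"] exI[of _ im2] exI[of _ rm2] exI[of _ c] exI[of _ m1]) auto
  next
    case False
    note S' = E(4)[unfolded search_inv_def]
    have "c < n"
      using False tail_ecc_le_cycle_ecc_last[of i] S' less.prems by (cases "c = n") auto
    obtain rm2 where T: "(step prog d ^^ 5) (46, im1, rm1) = (22, im1(-2 := int c + 1), rm2)"
      "mem_inv d n im1 rm2" "frame im1 rm1 im1 rm2"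
      using run_tail_test_advance[of d n im1 rm1 i c] E S' False by auto
    have "\<forall>k\<in>{i..<m1}. path_pos d k + path_pos d k < antipode_level d i (Suc c)"
      using S' antipode_level_mono_right[of i c "Suc c"] less.prems(3,4) \<open>c < n\<close> by fastforce
    moreover have "\<forall>j\<in>{i..<Suc c}. cycle_ecc d i j < tail_ecc d n i j"
      using S' False by (auto simp: less_Suc_eq)
    ultimately have inv: "search_inv d n i (Suc c) m1 (im1(-2 := int c + 1)) rm2"
      using S' T(2) \<open>c < n\<close> unfolding search_inv_def by simp
    have "n - Suc c < n - c" using \<open>c < n\<close> by simp
    from less.hyps[OF this inv] obtain t3 im3 rm3 c3 m3 where R:
      "(step prog d ^^ t3) (22, im1(-2 := int c + 1), rm2) = (18, im3, rm3)" "Suc c \<le> c3"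
      "t3 + 100 * Suc c + 20 * m1 \<le> 100 * c3 + 20 * m3 + 60"
      "search_inv d n i c3 m3 im3 rm3" "im3 (-1) = int (Suc i)" "output_ok d n i im3 rm3"
      "\<forall>a>0. a \<noteq> int i \<longrightarrow> im3 a = (im1(-2 := int c + 1)) a \<and> rm3 a = rm2 a"
      using E(5) less.prems(3,4) by auto
    show ?thesis
      using funpow_trans[OF funpow_trans[OF E(1) T(1)] R(1)] E T R
      by (intro exI[of _ "t1 + 5 + t3"] exI[of _ im3] exI[of _ rm3] exI[of _ c3] exI[of _ m3]) auto
  qed
qed

lemma search_inv_Suc:
  assumes S: "search_inv d n i c m im rm" and i: "1 \<le> i"
  shows "search_inv d n (Suc i) c m im rm"
proof -
  note S' = S[unfolded search_inv_def]
  have "cycle_ecc d (Suc i) j < tail_ecc d n (Suc i) j" if j: "Suc i \<le> j" "j < c" for j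
  proof -
    have "cycle_ecc d i j < tail_ecc d n i j" using S' j by auto
    then show ?thesis using ecc_gap_Suc_le[of i j] S' i j by linarith
  qed
  moreover have "path_pos d k + path_pos d k < antipode_level d (Suc i) c"
    if k: "Suc i \<le> k" "k < m" for k
  proof -
    have "path_pos d k + path_pos d k < antipode_level d i c" using S' k by auto
    then show ?thesis using antipode_level_le_Suc_left[of i c] S' i k by linarith
  qed
  ultimately show ?thesis using S' unfolding search_inv_def by auto
qed

lemma run_outer_iteration:
  assumes O: "outer_inv d n i c m im rm" and i: "i \<le> n"
  shows "\<exists>t im' rm' c' m'. (step prog d ^^ t) (18, im, rm) = (18, im', rm') \<and>
     outer_inv d n (Suc i) c' m' im' rm' \<and>
     t + 300 * i + 100 * c + 20 * m \<le> 300 * Suc i + 100 * c' + 20 * m'"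
proof -
  note O' = O[unfolded outer_inv_def search_inv_def]
  have "im 0 = int n" "im (-10) = 0" using O' by (auto simp: mem_inv_def)
  then obtain t0 where t0: "t0 \<le> 3"
    "(step prog d ^^ t0) (18, im, rm) = (22, im(-2 := int (max c i)), rm)"
    using run_outer_head[of im i c n d rm] O' i by blast
  have "antipode_level d i c \<le> antipode_level d i (max c i)"
    using antipode_level_mono_right[of i c "max c i"] O' i by simp
  then have "\<forall>k\<in>{i..<m}. path_pos d k + path_pos d k < antipode_level d i (max c i)"
    using O' by fastforce
  moreover have "\<forall>j\<in>{i..<max c i}. cycle_ecc d i j < tail_ecc d n i j"
    using O' by (auto simp: max_def)
  ultimately have inv: "search_inv d n i (max c i) m (im(-2 := int (max c i))) rm"
    using O' i unfolding search_inv_def by (simp add: le_max_iff_disj)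
  have "(im(-2 := int (max c i))) (-1) = int i" "1 \<le> i" "i \<le> max c i" using O' by auto
  from run_candidate_loop[OF inv this] obtain t im' rm' c' m' where C:
    "(step prog d ^^ t) (22, im(-2 := int (max c i)), rm) = (18, im', rm')" "max c i \<le> c'"
    "t + 100 * max c i + 20 * m \<le> 100 * c' + 20 * m' + 60"
    "search_inv d n i c' m' im' rm'" "im' (-1) = int (Suc i)" "output_ok d n i im' rm'"
    "\<forall>a>0. a \<noteq> int i \<longrightarrow> im' a = (im(-2 := int (max c i))) a \<and> rm' a = rm a"
    by blast
  have "output_ok d n i' im' rm'" if i': "i' \<in> {1..<i}" for i'
  proof -
    have "im' (int i') = im (int i')" "rm' (int i') = rm (int i')" using C(7) i' by auto
    then show ?thesis using O' i' unfolding outputs_below_def output_ok_def by simp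
  qed
  then have "outer_inv d n (Suc i) c' m' im' rm'"
    using C(4-6) search_inv_Suc[OF C(4)] O' i unfolding outer_inv_def outputs_below_def
    by (auto simp: less_Suc_eq)
  then show ?thesis
    using funpow_trans[OF t0(2) C(1)] t0 C(3)
    by (intro exI[of _ "t0 + t"] exI[of _ im'] exI[of _ rm'] exI[of _ c'] exI[of _ m']) auto
qed

lemma run_outer_loop:
  "outer_inv d n i c m im rm \<Longrightarrow>
   \<exists>t im' rm'. (step prog d ^^ t) (18, im, rm) = (19, im', rm') \<and> outputs_below d n (Suc n) im' rm' \<and>
     t + 300 * i + 100 * c + 20 * m \<le> 300 * Suc n + 120 * n + 1"
proof (induction "Suc n - i" arbitrary: i c m im rm rule: less_induct)
  case less
  note O' = less.prems[unfolded outer_inv_def search_inv_def]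
  show ?case
  proof (cases "i \<le> n")
    case True
    obtain t im' rm' c' m' where I: "(step prog d ^^ t) (18, im, rm) = (18, im', rm')"
      "outer_inv d n (Suc i) c' m' im' rm'"
      "t + 300 * i + 100 * c + 20 * m \<le> 300 * Suc i + 100 * c' + 20 * m'"
      using run_outer_iteration[OF less.prems True] by blast
    obtain t' im'' rm'' where "(step prog d ^^ t') (18, im', rm') = (19, im'', rm'')"
      "outputs_below d n (Suc n) im'' rm''"
      "t' + 300 * Suc i + 100 * c' + 20 * m' \<le> 300 * Suc n + 120 * n + 1"
      using less.hyps[OF _ I(2)] True by (metis Suc_diff_le diff_Suc_Suc lessI)
    then show ?thesis using funpow_trans[OF I(1)] I(3) by (intro exI[of _ "t + t'"]) auto
  next
    case False
    then have "i = Suc n" "(step prog d ^^ 1) (18, im, rm) = (19, im, rm)"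
      using O' by (auto simp: mem_inv_def step_eq)
    then show ?thesis using less.prems O' by (intro exI[of _ 1]) (auto simp: outer_inv_def)
  qed
qed

theorem run_prog_correct:
  assumes "1 \<le> n"
  shows "\<exists>t \<le> 500 * n. halted prog (run prog d n t) \<and> correct_output d n (run prog d n t)"
proof -
  obtain im0 rm0 where I: "(step prog d ^^ 3) (init n) = (3, im0, rm0)" "prefix_inv d n 1 im0 rm0"
    using run_init[of d n] assms by auto
  obtain t1 im1 rm1 where P: "(step prog d ^^ t1) (3, im0, rm0) = (13, im1, rm1)"
    "prefix_inv d n n im1 rm1" "t1 + 10 \<le> 10 * n + 1"
    using run_prefix_loop[OF I(2)] by auto
  obtain im2 rm2 where Q: "(step prog d ^^ 5) (13, im1, rm1) = (18, im2, rm2)"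
    "outer_inv d n 1 1 1 im2 rm2"
    using run_outer_setup[OF P(2)] by blast
  obtain t2 im3 rm3 where L: "(step prog d ^^ t2) (18, im2, rm2) = (19, im3, rm3)"
    "outputs_below d n (Suc n) im3 rm3" "t2 + 420 \<le> 300 * Suc n + 120 * n + 1"
    using run_outer_loop[OF Q(2)] by auto
  have "run prog d n (3 + t1 + 5 + t2) = (19, im3, rm3)"
    unfolding run_def using funpow_trans[OF funpow_trans[OF funpow_trans[OF I(1) P(1)] Q(1)] L(1)] .
  moreover have "3 + t1 + 5 + t2 \<le> 500 * n" using P(3) L(3) assms by simp
  ultimately show ?thesis
    using L(2) unfolding correct_output_def outputs_below_def output_ok_def halted_def
    by (intro exI[of _ "3 + t1 + 5 + t2"]) auto
qed

end

theorem lemma1: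
  shows "\<exists>(prog :: instr list) (c :: nat) (n0 :: nat). \<forall>n d. n \<ge> n0 \<longrightarrow> metric_on d n \<longrightarrow>
           (\<exists>t \<le> c * n. halted prog (run prog d n t) \<and> correct_output d n (run prog d n t))"
  using path_metric.run_prog_correct[OF path_metric.intro] by blast

end
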